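(* Let $q\ge2$, $G\in\mathbb G^q$ and $S=\Psi(G)$. Let $w$ be a white vertex of $S$ and suppose some edge $e$ incident to $w$ is a bridge of $S$ such that the connected component of $S\setminus e$ not containing $w$ is a tree. Then $w$ is admissible.
   Context: Fix an integer $q\ge 2$. A $(q+1)$-edge-colored graph (colored graph) is a finite connected graph, multiple edges allowed and no loops, whose edges carry colors in $\{0,1,\dots,q\}$ such that every vertex is incident to exactly one edge of each color. It is rooted if one color-0 edge is distinguished and oriented; it is bipartite if its vertices can be colored black and white so that every edge joins a black and a white vertex, with the convention that the origin of the root edge is black. $\mathbb G^q$ denotes the set of rooted bipartite colored graphs. Constellations: given $G\in\mathbb G^q$, its constellation $S=\Psi(G)$ is obtained as follows: orient every edge from its black to its white endpoint; contract every color-0 edge into a single vertex, called a white vertex of $S$ (the one coming from the root edge is the root vertex). For each $i\in\{1,\dots,q\}$ the color-$i$ edges now form directed cycles; for each such cycle, passing through white vertices $w_1,\dots,w_p$ in this cyclic order, add a new vertex of color $i$ joined by one color-$i$ edge to each $w_k$, equip the new vertex with the cyclic order $(w_1,\dots,w_p)$ of its incident edges, and delete the original color-$i$ edges of the cycle. $\Psi$ is a bijection from $\mathbb G^q$ onto the set of resulting objects ($q$-constellations). A white vertex $w$ of $S=\Psi(G)$ is admissible if the two endpoints of the color-0 edge of $G$ contracted to $w$ are joined in $G$ by a path containing no color-0 edge. *)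

theory Defs
  imports Main
begin

text \<open>A graph is given by a vertex set V, an edge set E, an endpoint map ends
  (each edge has a set of exactly two endpoints, so no loops; multiple edges allowed)
  and a colour map col.\<close>

definition adj_rel :: "'e set \<Rightarrow> ('e \<Rightarrow> 'v set) \<Rightarrow> ('v \<times> 'v) set" where
  "adj_rel E ends = {(u, v). \<exists>e\<in>E. ends e = {u, v}}"

definition mg_connected :: "'v set \<Rightarrow> 'e set \<Rightarrow> ('e \<Rightarrow> 'v set) \<Rightarrow> bool" where
  "mg_connected V E ends \<longleftrightarrow> V \<noteq> {} \<and> (\<forall>u\<in>V. \<forall>v\<in>V. (u, v) \<in> (adj_rel E ends)\<^sup>*)"

definition colored_graph ::
  "nat \<Rightarrow> 'v set \<Rightarrow> 'e set \<Rightarrow> ('e \<Rightarrow> 'v set) \<Rightarrow> ('e \<Rightarrow> nat) \<Rightarrow> bool" where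
  "colored_graph q V E ends col \<longleftrightarrow>
     finite V \<and> finite E \<and>
     (\<forall>e\<in>E. ends e \<subseteq> V \<and> card (ends e) = 2 \<and> col e \<le> q) \<and>
     (\<forall>v\<in>V. \<forall>i\<le>q. \<exists>!e. e \<in> E \<and> v \<in> ends e \<and> col e = i) \<and>
     mg_connected V E ends"

definition rooted_bipartite_colored_graph ::
  "nat \<Rightarrow> 'v set \<Rightarrow> 'e set \<Rightarrow> ('e \<Rightarrow> 'v set) \<Rightarrow> ('e \<Rightarrow> nat) \<Rightarrow> 'e \<Rightarrow> 'v \<Rightarrow> 'v set \<Rightarrow> bool" where
  "rooted_bipartite_colored_graph q V E ends col root rorig Bk \<longleftrightarrow>
     colored_graph q V E ends col \<and>
     root \<in> E \<and> col root = 0 \<and> rorig \<in> ends root \<and>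
     Bk \<subseteq> V \<and> (\<forall>e\<in>E. card (ends e \<inter> Bk) = 1) \<and> rorig \<in> Bk"

definition blk_end :: "('e \<Rightarrow> 'v set) \<Rightarrow> 'v set \<Rightarrow> 'e \<Rightarrow> 'v" where
  "blk_end ends Bk e = (THE v. v \<in> ends e \<and> v \<in> Bk)"

definition wht_end :: "('e \<Rightarrow> 'v set) \<Rightarrow> 'v set \<Rightarrow> 'e \<Rightarrow> 'v" where
  "wht_end ends Bk e = (THE v. v \<in> ends e \<and> v \<notin> Bk)"

definition inc_edge :: "'e set \<Rightarrow> ('e \<Rightarrow> 'v set) \<Rightarrow> ('e \<Rightarrow> nat) \<Rightarrow> 'v \<Rightarrow> nat \<Rightarrow> 'e" where
  "inc_edge E ends col v i = (THE e. e \<in> E \<and> v \<in> ends e \<and> col e = i)"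

text \<open>White vertices of S are the colour-0 edges of G (contracted).
  After contraction, the colour-i edge leaving (black end of) the contracted
  vertex w0 enters the contracted vertex containing its white end; this gives
  the successor map along the directed colour-i cycles.\<close>

definition white_verts :: "'e set \<Rightarrow> ('e \<Rightarrow> nat) \<Rightarrow> 'e set" where
  "white_verts E col = {e \<in> E. col e = 0}"

definition succ_i ::
  "'e set \<Rightarrow> ('e \<Rightarrow> 'v set) \<Rightarrow> ('e \<Rightarrow> nat) \<Rightarrow> 'v set \<Rightarrow> nat \<Rightarrow> 'e \<Rightarrow> 'e" where
  "succ_i E ends col Bk i w =
     inc_edge E ends col (wht_end ends Bk (inc_edge E ends col (blk_end ends Bk w) i)) 0"

definition cycle_i ::
  "'e set \<Rightarrow> ('e \<Rightarrow> 'v set) \<Rightarrow> ('e \<Rightarrow> nat) \<Rightarrow> 'v set \<Rightarrow> nat \<Rightarrow> 'e \<Rightarrow> 'e set" where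
  "cycle_i E ends col Bk i w = {(succ_i E ends col Bk i ^^ n) w | n. True}"

text \<open>Vertices of S: white vertices Inl w, and for each colour i in 1..q and each
  colour-i cycle C, a vertex Inr (i, C).\<close>

definition Psi_V :: "nat \<Rightarrow> 'e set \<Rightarrow> ('e \<Rightarrow> 'v set) \<Rightarrow> ('e \<Rightarrow> nat) \<Rightarrow> 'v set
    \<Rightarrow> ('e + nat \<times> 'e set) set" where
  "Psi_V q E ends col Bk =
     Inl ` white_verts E col \<union>
     {Inr (i, cycle_i E ends col Bk i w) | i w. i \<in> {1..q} \<and> w \<in> white_verts E col}"

definition Psi_E :: "nat \<Rightarrow> 'e set \<Rightarrow> ('e \<Rightarrow> 'v set) \<Rightarrow> ('e \<Rightarrow> nat) \<Rightarrow> 'v set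
    \<Rightarrow> ('e + nat \<times> 'e set) set set" where
  "Psi_E q E ends col Bk =
     {{Inl w, Inr (i, cycle_i E ends col Bk i w)} | i w. i \<in> {1..q} \<and> w \<in> white_verts E col}"

definition sg_reach :: "'a set set \<Rightarrow> ('a \<times> 'a) set" where
  "sg_reach ES = {(x, y). {x, y} \<in> ES}\<^sup>*"

definition sg_connected :: "'a set \<Rightarrow> 'a set set \<Rightarrow> bool" where
  "sg_connected VS ES \<longleftrightarrow> VS \<noteq> {} \<and> (\<forall>x\<in>VS. \<forall>y\<in>VS. (x, y) \<in> sg_reach ES)"

definition sg_component :: "'a set \<Rightarrow> 'a set set \<Rightarrow> 'a \<Rightarrow> 'a set" where
  "sg_component VS ES y = {x \<in> VS. (y, x) \<in> sg_reach ES}"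

definition sg_bridge :: "'a set \<Rightarrow> 'a set set \<Rightarrow> 'a set \<Rightarrow> bool" where
  "sg_bridge VS ES e \<longleftrightarrow> e \<in> ES \<and> \<not> sg_connected VS (ES - {e})"

definition sg_has_cycle :: "'a set \<Rightarrow> 'a set set \<Rightarrow> bool" where
  "sg_has_cycle VS ES \<longleftrightarrow> (\<exists>cs. length cs \<ge> 3 \<and> distinct cs \<and> set cs \<subseteq> VS \<and>
      (\<forall>j < length cs. {cs ! j, cs ! ((j + 1) mod length cs)} \<in> ES))"

definition sg_tree :: "'a set \<Rightarrow> 'a set set \<Rightarrow> bool" where
  "sg_tree VS ES \<longleftrightarrow> sg_connected VS ES \<and> \<not> sg_has_cycle VS ES"

definition induced_edges :: "'a set set \<Rightarrow> 'a set \<Rightarrow> 'a set set" where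
  "induced_edges ES K = {f \<in> ES. f \<subseteq> K}"

definition admissible ::
  "'e set \<Rightarrow> ('e \<Rightarrow> 'v set) \<Rightarrow> ('e \<Rightarrow> nat) \<Rightarrow> 'e \<Rightarrow> bool" where
  "admissible E ends col w \<longleftrightarrow>
     (\<exists>u v. ends w = {u, v} \<and> u \<noteq> v \<and>
        (u, v) \<in> (adj_rel {e \<in> E. col e \<noteq> 0} ends)\<^sup>*)"

end

theory Submission
  imports Defs
begin

text \<open>Suppose w is not admissible. Going once around a colour-j cycle of the constellation,
  the colour-j edges of G together with paths avoiding colour 0 between the two ends of the
  other white vertices of the cycle would join the two ends of w; hence every colour-j cycle
  through a non-admissible white vertex contains a second one. In the component T of S - e
  not containing w, the non-admissible white vertices and the colour vertices of cycles
  containing one therefore span a subgraph in which the far end of e has a neighbour and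
  every other vertex has at least two (a white vertex has q \<ge> 2 colour neighbours). Such a
  finite graph contains a cycle, contradicting that T is a tree.\<close>

lemma inj_on_funpow_periodic:
  assumes fin: "finite A" and inj: "inj_on f A" and maps: "f ` A \<subseteq> A" and x: "x \<in> A"
  obtains n where "n > 0" "(f ^^ n) x = x"
proof -
  have funpow_in: "(f ^^ k) y \<in> A" if "y \<in> A" for k y
    using that by (induction k) (use maps in auto)
  have inj_funpow: "inj_on (f ^^ k) A" for k
  proof (induction k)
    case (Suc k)
    have "inj_on (f \<circ> (f ^^ k)) A"
      by (rule comp_inj_on[OF Suc inj_on_subset[OF inj]]) (use funpow_in in auto)
    then show ?case by (simp add: comp_def)
  qed simp
  have "\<not> inj_on (\<lambda>k. (f ^^ k) x) {..card A}"
  proof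
    assume "inj_on (\<lambda>k. (f ^^ k) x) {..card A}"
    then have "card {..card A} \<le> card A"
      using card_inj_on_le[OF _ _ fin] funpow_in[OF x] by blast
    then show False by simp
  qed
  then have "\<exists>a b. a < b \<and> (f ^^ a) x = (f ^^ b) x"
    unfolding inj_on_def by (metis linorder_neqE_nat)
  then obtain a b where ab: "a < b" "(f ^^ a) x = (f ^^ b) x" by blast
  then have "(f ^^ a) ((f ^^ (b - a)) x) = (f ^^ a) x"
    by (metis add_diff_inverse_nat comp_apply funpow_add less_imp_le not_le)
  then have "(f ^^ (b - a)) x = x"
    using inj_funpow[of a] funpow_in x unfolding inj_on_def by blast
  then show ?thesis using ab by (intro that[of "b - a"]) auto
qed

lemma sg_reach_edge: "{a, b} \<in> ES \<Longrightarrow> (a, b) \<in> sg_reach ES"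
  unfolding sg_reach_def by auto

lemma sg_reach_trans: "(a, b) \<in> sg_reach ES \<Longrightarrow> (b, c) \<in> sg_reach ES \<Longrightarrow> (a, c) \<in> sg_reach ES"
  unfolding sg_reach_def by (rule rtrancl_trans)

lemma sg_reach_sym: "(a, b) \<in> sg_reach ES \<Longrightarrow> (b, a) \<in> sg_reach ES"
proof -
  have "sym {(x, y). {x, y} \<in> ES}" by (rule symI) (simp add: insert_commute)
  then show "(a, b) \<in> sg_reach ES \<Longrightarrow> (b, a) \<in> sg_reach ES"
    unfolding sg_reach_def by (meson sym_rtrancl symD)
qed

lemma sg_reach_remove_edge:
  assumes "(a, b) \<in> sg_reach ES"
  shows "(a, b) \<in> sg_reach (ES - {e}) \<or> (\<exists>z\<in>e. (a, z) \<in> sg_reach (ES - {e}))"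
  using assms unfolding sg_reach_def
proof (induction rule: rtrancl_induct)
  case (step b c)
  show ?case
  proof (cases "{b, c} = e")
    case True
    then show ?thesis using step.IH by blast
  next
    case False
    then have "(b, c) \<in> {(x, y). {x, y} \<in> ES - {e}}" using step.hyps(2) by simp
    then show ?thesis using step.IH by (meson rtrancl_into_rtrancl)
  qed
qed simp

lemma sg_component_edge_closed:
  assumes u: "u \<in> sg_component VS ES y" and ua: "{u, a} \<in> ES" and a: "a \<in> VS"
  shows "a \<in> sg_component VS ES y" "{u, a} \<in> induced_edges ES (sg_component VS ES y)"
proof -
  have "(y, u) \<in> sg_reach ES" using u unfolding sg_component_def by simp
  then have "(y, a) \<in> sg_reach ES" using sg_reach_edge[OF ua] by (rule sg_reach_trans)
  then show a_in: "a \<in> sg_component VS ES y" using a unfolding sg_component_def by simp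
  show "{u, a} \<in> induced_edges ES (sg_component VS ES y)"
    using u ua a_in unfolding induced_edges_def by simp
qed

lemma sg_component_contains_far_end:
  assumes reach: "(y, u) \<in> sg_reach ES" and "u \<in> VS" "v \<in> VS"
    and u_out: "u \<notin> sg_component VS (ES - {{u, v}}) y"
  shows "v \<in> sg_component VS (ES - {{u, v}}) y"
proof -
  obtain z where "z \<in> {u, v}" "(y, z) \<in> sg_reach (ES - {{u, v}})"
    using sg_reach_remove_edge[OF reach, of "{u, v}"] u_out \<open>u \<in> VS\<close>
    unfolding sg_component_def by blast
  then show ?thesis using u_out assms(2,3) unfolding sg_component_def by blast
qed

lemma sg_has_cycle_if_closed_path:
  assumes "3 \<le> length cs" "distinct cs" "set cs \<subseteq> VS"
    and path: "successively (\<lambda>a b. {a, b} \<in> ES) cs" and closing: "{last cs, hd cs} \<in> ES"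
  shows "sg_has_cycle VS ES"
  unfolding sg_has_cycle_def
proof (intro exI[of _ cs] conjI allI impI)
  fix j assume j: "j < length cs"
  show "{cs ! j, cs ! ((j + 1) mod length cs)} \<in> ES"
  proof (cases "Suc j < length cs")
    case True
    then show ?thesis using successively_nth[OF path] by simp
  next
    case False
    then have "j = length cs - 1" "cs \<noteq> []" using j by auto
    then show ?thesis using closing by (simp add: last_conv_nth hd_conv_nth)
  qed
qed (use assms in simp_all)

lemma sg_has_cycle_if_chord:
  assumes "distinct p" "set p \<subseteq> X" and path: "successively (\<lambda>a b. {a, b} \<in> ES) p"
    and k: "k + 2 < length p" and chord: "{last p, p ! k} \<in> ES"
  shows "sg_has_cycle X ES"
proof (rule sg_has_cycle_if_closed_path[of "drop k p"])
  show "3 \<le> length (drop k p)" using k by simp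
  show "distinct (drop k p)" using assms(1) by simp
  show "set (drop k p) \<subseteq> X" using assms(2) set_drop_subset[of k p] by blast
  show "successively (\<lambda>a b. {a, b} \<in> ES) (drop k p)"
    using path successively_append_iff[of _ "take k p" "drop k p"] by simp
  show "{last (drop k p), hd (drop k p)} \<in> ES"
    using chord k by (simp add: hd_drop_conv_nth last_drop)
qed

text \<open>A longest path starting at v0 closes up into a cycle at its last vertex.\<close>
lemma sg_has_cycle_if_degree_ge_2:
  assumes fin: "finite X" and v0: "v0 \<in> X" and loopfree: "\<forall>f\<in>ES. card f = 2"
    and deg_v0: "\<exists>a\<in>X. {v0, a} \<in> ES"
    and deg: "\<forall>x\<in>X. x \<noteq> v0 \<longrightarrow> (\<exists>a\<in>X. \<exists>b\<in>X. a \<noteq> b \<and> {x, a} \<in> ES \<and> {x, b} \<in> ES)"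
  shows "sg_has_cycle X ES"
proof -
  define is_path where "is_path p \<longleftrightarrow> p \<noteq> [] \<and> hd p = v0 \<and> distinct p \<and> set p \<subseteq> X \<and>
      successively (\<lambda>a b. {a, b} \<in> ES) p" for p
  have "is_path [v0]" using v0 unfolding is_path_def by simp
  moreover have "length p < card X + 1" if "is_path p" for p
  proof -
    have "length p = card (set p)" using that distinct_card unfolding is_path_def by metis
    also have "\<dots> \<le> card X" using that fin card_mono unfolding is_path_def by metis
    finally show ?thesis by simp
  qed
  ultimately obtain p where p: "is_path p" and longest: "\<And>p'. is_path p' \<Longrightarrow> length p' \<le> length p"
    using Lattices_Big.ex_has_greatest_nat[of is_path "[v0]" length "card X + 1"] by blast
  define n where "n = length p"
  define z where "z = last p"
  have p_ne: "p \<noteq> []" and hd_p: "hd p = v0" and dp: "distinct p" and pX: "set p \<subseteq> X"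
    and p_path: "successively (\<lambda>a b. {a, b} \<in> ES) p"
    using p unfolding is_path_def by auto
  have n1: "n \<ge> 1" using p_ne unfolding n_def by (simp add: Suc_le_eq)
  have z: "z = p ! (n - 1)" using p_ne unfolding z_def n_def by (simp add: last_conv_nth)
  have hd0: "p ! 0 = v0" using p_ne hd_p by (simp add: hd_conv_nth)
  have zX: "z \<in> X" using p_ne pX unfolding z_def by auto
  obtain a where aX: "a \<in> X" and za: "{z, a} \<in> ES" and not_pred: "n \<ge> 2 \<Longrightarrow> a \<noteq> p ! (n - 2)"
  proof (cases "n = 1")
    case True
    then show ?thesis using that deg_v0 z hd0 by auto
  next
    case False
    then have "p ! (n - 1) \<noteq> p ! 0"
      using nth_eq_iff_index_eq[OF dp, of "n - 1" 0] n1 p_ne unfolding n_def by simp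
    then have "z \<noteq> v0" using z hd0 by simp
    then obtain a b where "a \<in> X" "b \<in> X" "a \<noteq> b" "{z, a} \<in> ES" "{z, b} \<in> ES"
      using deg zX by blast
    then show ?thesis using that[of a] that[of b] by blast
  qed
  have "card {z, a} = 2" using loopfree za by blast
  then have "a \<noteq> z" by auto
  have "a \<in> set p"
  proof (rule ccontr)
    assume "a \<notin> set p"
    then have "is_path (p @ [a])"
      using p_ne hd_p dp pX p_path aX za unfolding is_path_def z_def
      by (simp add: successively_append_iff)
    then show False using longest[of "p @ [a]"] by simp
  qed
  then obtain k where k: "k < n" "p ! k = a" unfolding n_def by (metis in_set_conv_nth)
  have "k \<noteq> n - 1" using k \<open>a \<noteq> z\<close> z by auto
  moreover have "n \<ge> 2 \<Longrightarrow> k \<noteq> n - 2" using k not_pred by blast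
  ultimately have "k + 2 < length p" using k unfolding n_def by (cases "2 \<le> length p") auto
  moreover have "{last p, p ! k} \<in> ES" using za k(2) unfolding z_def by simp
  ultimately show ?thesis by (rule sg_has_cycle_if_chord[OF dp pX p_path])
qed

lemma sg_component_has_cycle:
  fixes VS :: "'a set" and ES :: "'a set set" and u v y :: 'a
  defines "K \<equiv> sg_component VS (ES - {{u, v}}) y"
  assumes fin: "finite VS" and edges: "\<forall>f\<in>ES. card f = 2 \<and> f \<subseteq> VS"
    and u_out: "u \<notin> K" and v_in: "v \<in> K" and v_Y: "v \<in> Y"
    and deg_v: "\<exists>a\<in>Y. a \<noteq> u \<and> {v, a} \<in> ES"
    and deg: "\<forall>p\<in>Y \<inter> K. p \<noteq> v \<longrightarrow> (\<exists>a\<in>Y. \<exists>b\<in>Y. a \<noteq> b \<and> {p, a} \<in> ES \<and> {p, b} \<in> ES)"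
  shows "sg_has_cycle K (induced_edges (ES - {{u, v}}) K)"
proof -
  let ?ES = "induced_edges (ES - {{u, v}}) K"
  have closed: "a \<in> Y \<inter> K \<and> {p, a} \<in> ?ES"
    if "p \<in> K" "a \<in> Y" "{p, a} \<in> ES" "{p, a} \<noteq> {u, v}" for p a
    using sg_component_edge_closed[of p VS "ES - {{u, v}}" y a] that edges unfolding K_def by auto
  have "u \<noteq> v" using u_out v_in by blast
  have "sg_has_cycle (Y \<inter> K) ?ES"
  proof (rule sg_has_cycle_if_degree_ge_2)
    show "finite (Y \<inter> K)" using fin unfolding K_def sg_component_def by simp
    show "\<forall>f\<in>?ES. card f = 2" using edges unfolding induced_edges_def by simp
    show "\<exists>a\<in>Y \<inter> K. {v, a} \<in> ?ES"
      using deg_v closed[OF v_in] \<open>u \<noteq> v\<close> by (metis doubleton_eq_iff)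
    show "\<forall>p\<in>Y \<inter> K. p \<noteq> v \<longrightarrow> (\<exists>a\<in>Y \<inter> K. \<exists>b\<in>Y \<inter> K. a \<noteq> b \<and> {p, a} \<in> ?ES \<and> {p, b} \<in> ?ES)"
    proof (intro ballI impI)
      fix p assume p: "p \<in> Y \<inter> K" "p \<noteq> v"
      then have "p \<notin> {u, v}" using u_out by auto
      then have "{p, a} \<noteq> {u, v}" for a by auto
      then show "\<exists>a\<in>Y \<inter> K. \<exists>b\<in>Y \<inter> K. a \<noteq> b \<and> {p, a} \<in> ?ES \<and> {p, b} \<in> ?ES"
        using deg p closed by (metis IntD2)
    qed
  qed (use v_in v_Y in simp)
  then show ?thesis unfolding sg_has_cycle_def by blast
qed

locale bipartite_colored_graph =
  fixes q :: nat and V :: "'v set" and E :: "'e set" and ends :: "'e \<Rightarrow> 'v set"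
    and col :: "'e \<Rightarrow> nat" and Bk :: "'v set"
  assumes colored: "colored_graph q V E ends col"
    and bipartite: "\<forall>f\<in>E. card (ends f \<inter> Bk) = 1"
begin

abbreviation "W \<equiv> white_verts E col"
abbreviation "H \<equiv> adj_rel {f \<in> E. col f \<noteq> 0} ends"
abbreviation "bl \<equiv> blk_end ends Bk"
abbreviation "wh \<equiv> wht_end ends Bk"
abbreviation "ie \<equiv> inc_edge E ends col"
abbreviation "s \<equiv> succ_i E ends col Bk"
abbreviation "cyc \<equiv> cycle_i E ends col Bk"
abbreviation "PV \<equiv> Psi_V q E ends col Bk"
abbreviation "PE \<equiv> Psi_E q E ends col Bk"

lemma ends_subset: "f \<in> E \<Longrightarrow> ends f \<subseteq> V"
  and col_le: "f \<in> E \<Longrightarrow> col f \<le> q"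
  and card_ends: "f \<in> E \<Longrightarrow> card (ends f) = 2"
  and ex1_inc_edge: "v \<in> V \<Longrightarrow> i \<le> q \<Longrightarrow> \<exists>!f. f \<in> E \<and> v \<in> ends f \<and> col f = i"
  using colored unfolding colored_graph_def by auto

lemma inc_edge:
  assumes "v \<in> V" "i \<le> q"
  shows "ie v i \<in> E" "v \<in> ends (ie v i)" "col (ie v i) = i"
  using theI'[OF ex1_inc_edge[OF assms]] unfolding inc_edge_def by auto

lemma inc_edge_eq:
  assumes "f \<in> E" "v \<in> ends f" "col f = i"
  shows "ie v i = f"
proof -
  have "v \<in> V" "i \<le> q" using assms ends_subset col_le by auto
  then show ?thesis using the1_equality[OF ex1_inc_edge] assms unfolding inc_edge_def by blast
qed

lemma black_white_ends:
  assumes f: "f \<in> E"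
  shows "ends f = {bl f, wh f}" "bl f \<in> Bk" "wh f \<notin> Bk"
proof -
  obtain a b where ab: "ends f = {a, b}" "a \<noteq> b" using card_ends[OF f] card_2_iff by metis
  have "card ({a, b} \<inter> Bk) = 1" using bipartite f ab by auto
  then have "(a \<in> Bk \<and> b \<notin> Bk) \<or> (b \<in> Bk \<and> a \<notin> Bk)"
    using ab(2) by (cases "a \<in> Bk"; cases "b \<in> Bk") auto
  then obtain x y where xy: "ends f = {x, y}" "x \<in> Bk" "y \<notin> Bk"
    using ab by (metis insert_commute)
  have "bl f = x" unfolding blk_end_def using xy by (intro the_equality) auto
  moreover have "wh f = y" unfolding wht_end_def using xy by (intro the_equality) auto
  ultimately show "ends f = {bl f, wh f}" "bl f \<in> Bk" "wh f \<notin> Bk" using xy by auto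
qed

lemma blk_end_in: "f \<in> E \<Longrightarrow> bl f \<in> ends f"
  and wht_end_in: "f \<in> E \<Longrightarrow> wh f \<in> ends f"
  using black_white_ends by auto

lemma blk_end_in_V: "f \<in> E \<Longrightarrow> bl f \<in> V"
  and wht_end_in_V: "f \<in> E \<Longrightarrow> wh f \<in> V"
  using blk_end_in wht_end_in ends_subset by auto

lemma blk_end_eq: "f \<in> E \<Longrightarrow> v \<in> ends f \<Longrightarrow> v \<in> Bk \<Longrightarrow> bl f = v"
  and wht_end_eq: "f \<in> E \<Longrightarrow> v \<in> ends f \<Longrightarrow> v \<notin> Bk \<Longrightarrow> wh f = v"
  using black_white_ends by fastforce+

lemma white_vert_E: "x \<in> W \<Longrightarrow> x \<in> E" and white_vert_col: "x \<in> W \<Longrightarrow> col x = 0"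
  unfolding white_verts_def by auto

lemma inc_edge_0_white_vert: "v \<in> V \<Longrightarrow> ie v 0 \<in> W"
  using inc_edge[of v 0] unfolding white_verts_def by auto

lemma inc_edge_0_blk_end: "x \<in> W \<Longrightarrow> ie (bl x) 0 = x"
  using inc_edge_eq[OF white_vert_E blk_end_in white_vert_col] white_vert_E by blast

lemma succ_i_step:
  assumes x: "x \<in> W" and j: "1 \<le> j" "j \<le> q"
  defines "f \<equiv> ie (bl x) j"
  shows "f \<in> E" "col f = j" "bl f = bl x" "s j x = ie (wh f) 0" "wh (s j x) = wh f"
proof -
  have xE: "x \<in> E" using x by (rule white_vert_E)
  show f: "f \<in> E" "col f = j" using inc_edge[OF blk_end_in_V[OF xE] j(2)] unfolding f_def by auto
  show "bl f = bl x"
    using blk_end_eq[OF f(1)] inc_edge(2)[OF blk_end_in_V[OF xE] j(2)] black_white_ends(2)[OF xE]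
    unfolding f_def by blast
  show sx: "s j x = ie (wh f) 0" unfolding succ_i_def f_def by simp
  show "wh (s j x) = wh f"
    using wht_end_eq inc_edge[OF wht_end_in_V[OF f(1)], of 0] black_white_ends(3)[OF f(1)]
    unfolding sx by blast
qed

lemma succ_i_white_vert: "x \<in> W \<Longrightarrow> 1 \<le> j \<Longrightarrow> j \<le> q \<Longrightarrow> s j x \<in> W"
  using succ_i_step(1,4) wht_end_in_V inc_edge_0_white_vert by metis

lemma succ_i_adj: "x \<in> W \<Longrightarrow> 1 \<le> j \<Longrightarrow> j \<le> q \<Longrightarrow> (bl x, wh (s j x)) \<in> H"
  using succ_i_step[of x j] black_white_ends(1) unfolding adj_rel_def by fastforce

lemma succ_i_inj_on:
  assumes j: "1 \<le> j" "j \<le> q"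
  shows "inj_on (s j) W"
proof (rule inj_onI)
  fix x x' assume x: "x \<in> W" and x': "x' \<in> W" and eq: "s j x = s j x'"
  let ?f = "ie (bl x) j" and ?f' = "ie (bl x') j"
  note f = succ_i_step(1,2)[OF x j] and f' = succ_i_step(1,2)[OF x' j]
  have "?f = ie (wh ?f) j" by (rule inc_edge_eq[OF f(1) wht_end_in[OF f(1)] f(2), symmetric])
  also have "wh ?f = wh (s j x)" by (rule succ_i_step(5)[OF x j, symmetric])
  also have "\<dots> = wh (s j x')" by (simp only: eq)
  also have "\<dots> = wh ?f'" by (rule succ_i_step(5)[OF x' j])
  also have "ie (wh ?f') j = ?f'" by (rule inc_edge_eq[OF f'(1) wht_end_in[OF f'(1)] f'(2)])
  finally have ff: "?f = ?f'" .
  have "bl x = bl ?f" by (rule succ_i_step(3)[OF x j, symmetric])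
  also have "\<dots> = bl ?f'" by (simp only: ff)
  also have "\<dots> = bl x'" by (rule succ_i_step(3)[OF x' j])
  finally have bb: "bl x = bl x'" .
  have "x = ie (bl x) 0" by (rule inc_edge_0_blk_end[OF x, symmetric])
  also have "\<dots> = ie (bl x') 0" by (simp only: bb)
  also have "\<dots> = x'" by (rule inc_edge_0_blk_end[OF x'])
  finally show "x = x'" .
qed

lemma finite_white_verts: "finite W"
  using colored unfolding colored_graph_def white_verts_def by simp

lemma succ_i_funpow_white_vert: "x \<in> W \<Longrightarrow> 1 \<le> j \<Longrightarrow> j \<le> q \<Longrightarrow> (s j ^^ n) x \<in> W"
  by (induction n) (auto intro: succ_i_white_vert)

lemma succ_i_periodic:
  assumes "x \<in> W" "1 \<le> j" "j \<le> q"
  obtains n where "n > 0" "(s j ^^ n) x = x"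
proof (rule inj_on_funpow_periodic[OF finite_white_verts succ_i_inj_on[OF assms(2,3)] _ assms(1)])
  show "s j ` W \<subseteq> W" using succ_i_white_vert assms(2,3) by blast
qed (rule that)

lemma cycle_i_white_verts: "x \<in> W \<Longrightarrow> 1 \<le> j \<Longrightarrow> j \<le> q \<Longrightarrow> cyc j x \<subseteq> W"
  unfolding cycle_i_def using succ_i_funpow_white_vert by auto

lemma cycle_i_self: "x \<in> cyc j x"
  unfolding cycle_i_def by (auto intro: exI[of _ 0])

lemma cycle_i_eq:
  assumes x: "x \<in> W" and j: "1 \<le> j" "j \<le> q" and z: "z \<in> cyc j x"
  shows "cyc j z = cyc j x"
proof -
  obtain a where a: "z = (s j ^^ a) x" using z unfolding cycle_i_def by auto
  obtain N where N: "N > 0" "(s j ^^ N) x = x" using succ_i_periodic[OF x j] .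
  have NN: "(s j ^^ (N * k)) x = x" for k
  proof (induction k)
    case (Suc k)
    have "(s j ^^ (N * Suc k)) x = (s j ^^ N) ((s j ^^ (N * k)) x)"
      by (simp add: funpow_add add.commute)
    then show ?case using Suc N(2) by simp
  qed simp
  have "(s j ^^ n) z \<in> cyc j x" for n
  proof -
    have "(s j ^^ n) z = (s j ^^ (n + a)) x" unfolding a by (simp add: funpow_add)
    then show ?thesis unfolding cycle_i_def by blast
  qed
  moreover have "(s j ^^ n) x \<in> cyc j z" for n
  proof -
    have "a \<le> N * a" using N(1) by simp
    then have sum: "n + (N * a - a) + a = n + N * a" by arith
    have "(s j ^^ (n + (N * a - a))) z = (s j ^^ (n + (N * a - a) + a)) x"
      unfolding a by (simp add: funpow_add)
    also have "\<dots> = (s j ^^ n) ((s j ^^ (N * a)) x)" by (simp only: sum funpow_add comp_apply)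
    also have "\<dots> = (s j ^^ n) x" by (simp only: NN)
    finally have "(s j ^^ n) x = (s j ^^ (n + (N * a - a))) z" by simp
    then show ?thesis unfolding cycle_i_def by blast
  qed
  ultimately show ?thesis unfolding cycle_i_def by blast
qed

lemma nonzero_reach_sym: "(a, b) \<in> H\<^sup>* \<Longrightarrow> (b, a) \<in> H\<^sup>*"
proof -
  have "sym H" unfolding adj_rel_def by (rule symI) (simp add: insert_commute)
  then show "(a, b) \<in> H\<^sup>* \<Longrightarrow> (b, a) \<in> H\<^sup>*" by (meson sym_rtrancl symD)
qed

lemma admissible_iff_reach:
  assumes x: "x \<in> W"
  shows "admissible E ends col x \<longleftrightarrow> (bl x, wh x) \<in> H\<^sup>*"
proof -
  have ends_x: "ends x = {bl x, wh x}" "bl x \<noteq> wh x"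
    using black_white_ends[OF white_vert_E[OF x]] by auto
  show ?thesis
  proof
    assume "admissible E ends col x"
    then obtain u v where uv: "ends x = {u, v}" "(u, v) \<in> H\<^sup>*"
      unfolding admissible_def by blast
    then have "(u, v) = (bl x, wh x) \<or> (u, v) = (wh x, bl x)"
      using ends_x(1) by (auto simp: doubleton_eq_iff)
    then show "(bl x, wh x) \<in> H\<^sup>*" using uv(2) nonzero_reach_sym by blast
  qed (use ends_x in \<open>auto simp: admissible_def\<close>)
qed

text \<open>Otherwise, chaining the paths bl z \<leadsto> wh z of the other white vertices z on the
  colour-j cycle with the colour-j edges from bl z to wh (s j z) leads from bl x around
  the cycle back to wh x without using colour 0.\<close>
lemma nonadmissible_on_cycle:
  assumes x: "x \<in> W" and j: "1 \<le> j" "j \<le> q" and nonadm: "\<not> admissible E ends col x"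
  shows "\<exists>z\<in>cyc j x. z \<noteq> x \<and> \<not> admissible E ends col z"
proof (rule ccontr)
  assume "\<not> ?thesis"
  then have others_adm: "admissible E ends col z" if "z \<in> cyc j x" "z \<noteq> x" for z
    using that by blast
  have not_reach: "(bl x, wh x) \<notin> H\<^sup>*" using nonadm admissible_iff_reach[OF x] by simp
  have around: "(bl x, wh ((s j ^^ Suc k) x)) \<in> H\<^sup>*" for k
  proof (induction k)
    case 0
    then show ?case using succ_i_adj[OF x j] by simp
  next
    case (Suc k)
    define z where "z = (s j ^^ Suc k) x"
    have zW: "z \<in> W" unfolding z_def by (rule succ_i_funpow_white_vert[OF x j])
    have "z \<noteq> x" using Suc.IH not_reach unfolding z_def by auto
    moreover have "z \<in> cyc j x" unfolding cycle_i_def z_def by blast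
    ultimately have "(wh z, bl z) \<in> H\<^sup>*"
      using others_adm admissible_iff_reach[OF zW] nonzero_reach_sym by blast
    then have "(wh z, wh (s j z)) \<in> H\<^sup>*" using succ_i_adj[OF zW j] by simp
    then show ?case using Suc.IH unfolding z_def by simp
  qed
  obtain N where "N > 0" "(s j ^^ N) x = x" using succ_i_periodic[OF x j] .
  then show False using around[of "N - 1"] not_reach by simp
qed

lemma Psi_E_edge: "x \<in> W \<Longrightarrow> 1 \<le> j \<Longrightarrow> j \<le> q \<Longrightarrow> {Inl x, Inr (j, cyc j x)} \<in> PE"
  unfolding Psi_E_def by auto

lemma Psi_E_at_Inl:
  assumes "f \<in> PE" "Inl x \<in> f"
  shows "\<exists>j. 1 \<le> j \<and> j \<le> q \<and> f = {Inl x, Inr (j, cyc j x)}"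
proof -
  obtain j x' where "f = {Inl x', Inr (j, cyc j x')}" "1 \<le> j" "j \<le> q"
    using assms(1) unfolding Psi_E_def by auto
  moreover from this have "x' = x" using assms(2) by auto
  ultimately show ?thesis by blast
qed

lemma Psi_E_card_subset: "f \<in> PE \<Longrightarrow> card f = 2 \<and> f \<subseteq> PV"
  unfolding Psi_E_def Psi_V_def by auto

lemma Psi_V_Inr: "Inr (j, D) \<in> PV \<Longrightarrow> \<exists>x\<in>W. D = cyc j x \<and> 1 \<le> j \<and> j \<le> q"
  unfolding Psi_V_def by auto

lemma finite_Psi_V: "finite PV"
proof -
  have eq: "{Inr (i, cyc i w) | i w. i \<in> {1..q} \<and> w \<in> W}
      = (\<lambda>(i, w). Inr (i, cyc i w)) ` ({1..q} \<times> W)"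
    by auto
  show ?thesis unfolding Psi_V_def eq using finite_white_verts by simp
qed

lemma Psi_reach_succ_i:
  assumes x: "x \<in> W" and j: "1 \<le> j" "j \<le> q"
  shows "(Inl x, Inl (s j x)) \<in> sg_reach PE"
proof -
  have "s j x \<in> cyc j x" unfolding cycle_i_def by (auto intro: exI[of _ 1])
  then have "cyc j (s j x) = cyc j x" by (rule cycle_i_eq[OF x j])
  then have "{Inr (j, cyc j x), Inl (s j x)} \<in> PE"
    using Psi_E_edge[OF succ_i_white_vert[OF x j] j] by (simp add: insert_commute)
  then show ?thesis by (rule sg_reach_trans[OF sg_reach_edge[OF Psi_E_edge[OF x j]] sg_reach_edge])
qed

lemma Psi_reach_adj:
  assumes "(a, c) \<in> adj_rel E ends"
  shows "(Inl (ie a 0), Inl (ie c 0)) \<in> sg_reach PE"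
proof -
  obtain f where f: "f \<in> E" "ends f = {a, c}" using assms unfolding adj_rel_def by auto
  show ?thesis
  proof (cases "col f = 0")
    case True
    have "a \<in> ends f" "c \<in> ends f" using f(2) by auto
    then have "ie a 0 = f" "ie c 0 = f" using inc_edge_eq[OF f(1) _ True] by blast+
    then show ?thesis unfolding sg_reach_def by simp
  next
    case False
    then have j: "1 \<le> col f" "col f \<le> q" using col_le[OF f(1)] by auto
    let ?x = "ie (bl f) 0"
    have xW: "?x \<in> W" by (rule inc_edge_0_white_vert[OF blk_end_in_V[OF f(1)]])
    have "bl ?x = bl f"
      by (rule blk_end_eq[OF white_vert_E[OF xW] inc_edge(2)[OF blk_end_in_V[OF f(1)]]
            black_white_ends(2)[OF f(1)]]) simp
    then have "ie (bl ?x) (col f) = f" using inc_edge_eq[OF f(1) blk_end_in[OF f(1)]] by simp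
    then have "s (col f) ?x = ie (wh f) 0" unfolding succ_i_def by simp
    then have black_to_white: "(Inl (ie (bl f) 0), Inl (ie (wh f) 0)) \<in> sg_reach PE"
      using Psi_reach_succ_i[OF xW j] by simp
    have "{a, c} = {bl f, wh f}" using f black_white_ends(1)[OF f(1)] by simp
    then have "(a, c) = (bl f, wh f) \<or> (a, c) = (wh f, bl f)" by (auto simp: doubleton_eq_iff)
    then show ?thesis using black_to_white sg_reach_sym[OF black_to_white] by blast
  qed
qed

lemma Psi_reach_inc_edge_0:
  assumes "v \<in> V" "v' \<in> V"
  shows "(Inl (ie v 0), Inl (ie v' 0)) \<in> sg_reach PE"
proof -
  have "(v, v') \<in> (adj_rel E ends)\<^sup>*"
    using colored assms unfolding colored_graph_def mg_connected_def by blast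
  then show ?thesis
  proof (induction rule: rtrancl_induct)
    case (step b c)
    show ?case by (rule sg_reach_trans[OF step.IH Psi_reach_adj[OF step(2)]])
  qed (simp add: sg_reach_def)
qed

lemma Psi_reach_white_verts:
  assumes p: "p \<in> PV" and x: "x \<in> W"
  shows "(p, Inl x) \<in> sg_reach PE"
proof -
  have whites: "(Inl x', Inl x) \<in> sg_reach PE" if x': "x' \<in> W" for x'
    using Psi_reach_inc_edge_0[OF blk_end_in_V[OF white_vert_E[OF x']] blk_end_in_V[OF white_vert_E[OF x]]]
    by (simp only: inc_edge_0_blk_end[OF x'] inc_edge_0_blk_end[OF x])
  from p consider (white) x' where "p = Inl x'" "x' \<in> W"
    | (colour) j x' where "p = Inr (j, cyc j x')" "x' \<in> W" "1 \<le> j" "j \<le> q"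
    unfolding Psi_V_def by auto
  then show ?thesis
  proof cases
    case white
    then show ?thesis using whites by simp
  next
    case colour
    then have "(p, Inl x') \<in> sg_reach PE"
      using Psi_E_edge[OF colour(2-4)] by (intro sg_reach_edge) (simp add: insert_commute)
    then show ?thesis using whites[OF colour(2)] by (rule sg_reach_trans)
  qed
qed

definition nonadm_whites :: "'e set" where
  "nonadm_whites = {x \<in> W. \<not> admissible E ends col x}"

definition nonadm_touching :: "('e + nat \<times> 'e set) set" where
  "nonadm_touching = Inl ` nonadm_whites \<union> {Inr (j, D) | j D. D \<inter> nonadm_whites \<noteq> {}}"

lemma Inr_nonadm_neighbour:
  assumes p: "Inr (j, D) \<in> PV" and x: "x \<in> D" "x \<in> nonadm_whites"
  shows "{Inr (j, D), Inl x} \<in> PE"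
    and "\<exists>z\<in>nonadm_whites. z \<noteq> x \<and> {Inr (j, D), Inl z} \<in> PE"
proof -
  obtain x' where x': "x' \<in> W" "D = cyc j x'" and j: "1 \<le> j" "j \<le> q"
    using Psi_V_Inr[OF p] by blast
  have xW: "x \<in> W" and nonadm: "\<not> admissible E ends col x"
    using x(2) unfolding nonadm_whites_def by auto
  have cyc_D: "cyc j u = D" if "u \<in> D" for u
    using cycle_i_eq[OF x'(1) j] that x'(2) by simp
  have edge: "{Inr (j, D), Inl u} \<in> PE" if "u \<in> D" "u \<in> W" for u
    using Psi_E_edge[OF that(2) j] cyc_D[OF that(1)] by (simp add: insert_commute)
  show "{Inr (j, D), Inl x} \<in> PE" by (rule edge[OF x(1) xW])
  obtain z where z: "z \<in> cyc j x" "z \<noteq> x" "\<not> admissible E ends col z"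
    using nonadmissible_on_cycle[OF xW j nonadm] by blast
  have "z \<in> D" using z(1) cyc_D[OF x(1)] by simp
  moreover have "z \<in> W" using z(1) cycle_i_white_verts[OF xW j] by blast
  ultimately show "\<exists>z\<in>nonadm_whites. z \<noteq> x \<and> {Inr (j, D), Inl z} \<in> PE"
    using z edge unfolding nonadm_whites_def by blast
qed

text \<open>A white vertex reaches two such neighbours through its colour-1 and colour-2 vertices
  (this is where q \<ge> 2 enters), a colour vertex through two non-admissible white vertices
  on its cycle.\<close>
lemma nonadm_touching_two_neighbours:
  assumes q: "q \<ge> 2" and p: "p \<in> nonadm_touching" "p \<in> PV"
  shows "\<exists>a\<in>nonadm_touching. \<exists>b\<in>nonadm_touching. a \<noteq> b \<and> {p, a} \<in> PE \<and> {p, b} \<in> PE"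
proof -
  from p(1) consider (white) x where "p = Inl x" "x \<in> nonadm_whites"
    | (colour) j D x where "p = Inr (j, D)" "x \<in> D" "x \<in> nonadm_whites"
    unfolding nonadm_touching_def by blast
  then show ?thesis
  proof cases
    case white
    have xW: "x \<in> W" using white(2) unfolding nonadm_whites_def by simp
    have touching: "Inr (j, cyc j x) \<in> nonadm_touching" for j
      using white(2) cycle_i_self[of x j] unfolding nonadm_touching_def by blast
    have edge: "{p, Inr (j, cyc j x)} \<in> PE" if "1 \<le> j" "j \<le> q" for j
      unfolding white(1) by (rule Psi_E_edge[OF xW that])
    have "{p, Inr (1, cyc 1 x)} \<in> PE" "{p, Inr (2, cyc 2 x)} \<in> PE"
      by (rule edge; use q in simp)+
    then show ?thesis
      by (intro bexI[of _ "Inr (1, cyc 1 x)"] bexI[of _ "Inr (2, cyc 2 x)"] conjI touching) simp_all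
  next
    case colour
    have p_PV: "Inr (j, D) \<in> PV" using p(2) unfolding colour(1) .
    obtain z where z: "z \<in> nonadm_whites" "z \<noteq> x" "{Inr (j, D), Inl z} \<in> PE"
      using Inr_nonadm_neighbour(2)[OF p_PV colour(2,3)] by blast
    have "Inl x \<in> nonadm_touching" "Inl z \<in> nonadm_touching"
      using z(1) colour(3) unfolding nonadm_touching_def by simp_all
    then show ?thesis
      using z(2,3) Inr_nonadm_neighbour(1)[OF p_PV colour(2,3)] unfolding colour(1)
      by (intro bexI[of _ "Inl x"] bexI[of _ "Inl z"] conjI) auto
  qed
qed

lemma nonadm_component_has_cycle:
  assumes q: "q \<ge> 2" and w: "w \<in> nonadm_whites" and i: "1 \<le> i" "i \<le> q" and y: "y \<in> PV"
    and w_out: "Inl w \<notin> sg_component PV (PE - {{Inl w, Inr (i, cyc i w)}}) y"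
  shows "sg_has_cycle (sg_component PV (PE - {{Inl w, Inr (i, cyc i w)}}) y)
           (induced_edges (PE - {{Inl w, Inr (i, cyc i w)}})
              (sg_component PV (PE - {{Inl w, Inr (i, cyc i w)}}) y))"
proof (rule sg_component_has_cycle[OF finite_Psi_V _ w_out])
  let ?v = "Inr (i, cyc i w)"
  have wW: "w \<in> W" using w unfolding nonadm_whites_def by simp
  have v_PV: "?v \<in> PV" and w_PV: "Inl w \<in> PV"
    using Psi_E_card_subset[OF Psi_E_edge[OF wW i]] by auto
  show "?v \<in> sg_component PV (PE - {{Inl w, ?v}}) y"
    by (rule sg_component_contains_far_end[OF Psi_reach_white_verts[OF y wW] w_PV v_PV w_out])
  show "?v \<in> nonadm_touching"
    using w cycle_i_self[of w i] unfolding nonadm_touching_def by blast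
  show "\<exists>a\<in>nonadm_touching. a \<noteq> Inl w \<and> {?v, a} \<in> PE"
    using Inr_nonadm_neighbour(2)[OF v_PV cycle_i_self w] unfolding nonadm_touching_def by blast
  show "\<forall>f\<in>PE. card f = 2 \<and> f \<subseteq> PV" using Psi_E_card_subset by blast
  show "\<forall>p\<in>nonadm_touching \<inter> sg_component PV (PE - {{Inl w, ?v}}) y. p \<noteq> ?v \<longrightarrow>
      (\<exists>a\<in>nonadm_touching. \<exists>b\<in>nonadm_touching. a \<noteq> b \<and> {p, a} \<in> PE \<and> {p, b} \<in> PE)"
    using nonadm_touching_two_neighbours[OF q] unfolding sg_component_def by blast
qed

end

theorem mainTheorem5:
  fixes q :: nat and V :: "'v set" and E :: "'e set" and ends :: "'e \<Rightarrow> 'v set"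
    and col :: "'e \<Rightarrow> nat" and root :: 'e and rorig :: 'v and Bk :: "'v set"
    and w :: 'e and e :: "('e + nat \<times> 'e set) set" and y :: "'e + nat \<times> 'e set"
  assumes "q \<ge> 2"
    and "rooted_bipartite_colored_graph q V E ends col root rorig Bk"
    and "w \<in> white_verts E col"
    and "Inl w \<in> e"
    and "sg_bridge (Psi_V q E ends col Bk) (Psi_E q E ends col Bk) e"
    and "y \<in> Psi_V q E ends col Bk"
    and "Inl w \<notin> sg_component (Psi_V q E ends col Bk) (Psi_E q E ends col Bk - {e}) y"
    and "sg_tree (sg_component (Psi_V q E ends col Bk) (Psi_E q E ends col Bk - {e}) y)
           (induced_edges (Psi_E q E ends col Bk - {e})
              (sg_component (Psi_V q E ends col Bk) (Psi_E q E ends col Bk - {e}) y))"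
  shows "admissible E ends col w"
proof (rule ccontr)
  assume "\<not> admissible E ends col w"
  interpret bipartite_colored_graph q V E ends col Bk
    using assms(2) unfolding rooted_bipartite_colored_graph_def by unfold_locales auto
  have w: "w \<in> nonadm_whites"
    using assms(3) \<open>\<not> admissible E ends col w\<close> unfolding nonadm_whites_def by simp
  obtain i where i: "1 \<le> i" "i \<le> q" and e: "e = {Inl w, Inr (i, cyc i w)}"
    using Psi_E_at_Inl assms(4,5) unfolding sg_bridge_def by blast
  let ?K = "sg_component PV (PE - {e}) y"
  have "sg_has_cycle ?K (induced_edges (PE - {e}) ?K)"
    using nonadm_component_has_cycle[OF assms(1) w i assms(6)] assms(7) unfolding e by blast
  then show False using assms(8) unfolding sg_tree_def by blast
qed

end
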